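(* Let $(x,y,z,t)\in\mathbb{C}^4$ and $\lambda,\mu\in\mathbb{C}\setminus\{0\}$. Let $((x_n,y_n,z_n,t_n))_n$ be the optimal F sequence starting from $(x,y,z,t)$ and $((x'_n,y'_n,z'_n,t'_n))_n$ the optimal F sequence starting from $(\lambda x,\lambda y,\mu z,\mu t)$. Assume $z_\infty=\lim z_n$ and $z'_\infty=\lim z'_n$ exist and are nonzero, and that $L=\lim_n (x_n/z_\infty)^{2^n}$ and $L'=\lim_n (x'_n/z'_\infty)^{2^n}$ exist with $L\neq0$. Then $$\mu=\frac{z'_\infty}{z_\infty},\qquad \lambda=\frac{L'\,z'_\infty}{L\,z_\infty}.$$
   Context: Optimal F sequence: given $(x_0,y_0,z_0,t_0)\in\mathbb{C}^4$, define recursively $$(x_{n+1},y_{n+1},z_{n+1},t_{n+1})=\Big(\tfrac{\sqrt{x_n}\sqrt{z_n}+\sqrt{y_n}\sqrt{t_n}}{2},\ \tfrac{\sqrt{x_n}\sqrt{t_n}+\sqrt{y_n}\sqrt{z_n}}{2},\ \tfrac{z_n+t_n}{2},\ \sqrt{z_n}\sqrt{t_n}\Big),$$ where at each rank the square roots are chosen "good": $\Re\sqrt{x_n}\ge0$, $\Re\sqrt{z_n}\ge0$; either $|\sqrt{x_n}-\sqrt{y_n}|<|\sqrt{x_n}+\sqrt{y_n}|$ or equality and $\Im(\sqrt{y_n}/\sqrt{x_n})>0$; either $|\sqrt{z_n}-\sqrt{t_n}|<|\sqrt{z_n}+\sqrt{t_n}|$ or equality and $\Im(\sqrt{t_n}/\sqrt{z_n})>0$.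 *)

theory Defs
  imports Complex_Main
begin

definition good_roots :: "complex \<Rightarrow> complex \<Rightarrow> complex \<Rightarrow> complex \<Rightarrow> bool" where
  "good_roots u v a b \<longleftrightarrow> a^2 = u \<and> b^2 = v \<and> Re a \<ge> 0 \<and>
     (cmod (a - b) < cmod (a + b) \<or> (cmod (a - b) = cmod (a + b) \<and> Im (b / a) > 0))"

definition optimal_F_seq ::
  "complex \<Rightarrow> complex \<Rightarrow> complex \<Rightarrow> complex \<Rightarrow>
   (nat \<Rightarrow> complex) \<Rightarrow> (nat \<Rightarrow> complex) \<Rightarrow> (nat \<Rightarrow> complex) \<Rightarrow> (nat \<Rightarrow> complex) \<Rightarrow> bool" where
  "optimal_F_seq x0 y0 z0 t0 xs ys zs ts \<longleftrightarrow>
     xs 0 = x0 \<and> ys 0 = y0 \<and> zs 0 = z0 \<and> ts 0 = t0 \<and>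
     (\<forall>n. \<exists>a b c d. good_roots (xs n) (ys n) a b \<and> good_roots (zs n) (ts n) c d \<and>
        xs (Suc n) = (a * c + b * d) / 2 \<and>
        ys (Suc n) = (a * d + b * c) / 2 \<and>
        zs (Suc n) = (zs n + ts n) / 2 \<and>
        ts (Suc n) = c * d)"

end

theory Submission
  imports Defs
begin

text \<open>Scaling the starting point by (\<lambda>, \<lambda>, \<mu>, \<mu>) scales the whole optimal F sequence:
  good square roots are unique up to the sign of the pair, and the goodness condition is invariant
  under a common factor of both roots but is violated when only b changes sign. By induction,
  x'_n = l_n x_n and z'_n = \<mu> z_n with l_n^{2^n} = \<lambda> \<mu>^{2^n - 1}, so that
  z'_\<infinity> = \<mu> z_\<infinity> and (x'_n/z'_\<infinity>)^{2^n} = (\<lambda>/\<mu>) (x_n/z_\<infinity>)^{2^n}; passing to the limit gives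
  L' = (\<lambda>/\<mu>) L.\<close>

lemma good_roots_nonzero: "good_roots u v a b \<Longrightarrow> a \<noteq> 0"
  unfolding good_roots_def by auto

lemma good_roots_not_opposite:
  assumes g: "good_roots u v a b" and r: "r \<noteq> 0"
  shows "\<not> good_roots u' v' (r * a) (- (r * b))"
proof
  assume g': "good_roots u' v' (r * a) (- (r * b))"
  have a: "a \<noteq> 0" using good_roots_nonzero[OF g] .
  have minus: "cmod (r * a - - (r * b)) = cmod r * cmod (a + b)"
    and plus: "cmod (r * a + - (r * b)) = cmod r * cmod (a - b)"
    by (simp_all add: algebra_simps norm_mult[symmetric])
  have quot: "- (r * b) / (r * a) = - (b / a)" using r a by (simp add: field_simps)
  have "cmod r > 0" using r by simp
  with g' have "cmod (a + b) < cmod (a - b) \<or> (cmod (a + b) = cmod (a - b) \<and> Im (b / a) < 0)"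
    unfolding good_roots_def minus plus quot by auto
  with g show False unfolding good_roots_def by auto
qed

lemma good_roots_scale:
  assumes g: "good_roots u v a b" and g': "good_roots (k * u) (k * v) a' b'" and k: "k \<noteq> 0"
  shows "\<exists>r. r\<^sup>2 = k \<and> a' = r * a \<and> b' = r * b"
proof -
  have a: "a \<noteq> 0" using good_roots_nonzero[OF g] .
  define r where "r = a' / a"
  have a': "a' = r * a" using a by (simp add: r_def)
  have uv: "u = a\<^sup>2" "v = b\<^sup>2" and uv': "a'\<^sup>2 = k * u" "b'\<^sup>2 = k * v"
    using g g' by (auto simp: good_roots_def)
  then have "r\<^sup>2 * a\<^sup>2 = k * a\<^sup>2" using a' by (simp add: power_mult_distrib)
  then have r2: "r\<^sup>2 = k" using a by simp
  then have r: "r \<noteq> 0" using k by auto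
  have "b'\<^sup>2 = (r * b)\<^sup>2" using uv uv' r2 by (simp add: power_mult_distrib)
  then have "b' = r * b \<or> b' = - (r * b)" by (simp add: power2_eq_iff)
  moreover have "b' \<noteq> - (r * b)"
    using good_roots_not_opposite[OF g r] g' a' by auto
  ultimately show ?thesis using r2 a' by blast
qed

lemma optimal_F_seq_scale:
  assumes lam: "lam \<noteq> 0" and mu: "mu \<noteq> 0"
    and F: "optimal_F_seq x y z t xs ys zs ts"
    and F': "optimal_F_seq (lam * x) (lam * y) (mu * z) (mu * t) xs' ys' zs' ts'"
  shows "\<exists>l. xs' n = l * xs n \<and> ys' n = l * ys n \<and> zs' n = mu * zs n \<and> ts' n = mu * ts n
     \<and> l ^ (2 ^ n) * mu = lam * mu ^ (2 ^ n)"
proof (induction n)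
  case 0
  show ?case using F F' unfolding optimal_F_seq_def by (intro exI[of _ lam]) auto
next
  case (Suc n)
  then obtain l where l: "xs' n = l * xs n" "ys' n = l * ys n" "zs' n = mu * zs n"
    "ts' n = mu * ts n" and pow: "l ^ (2 ^ n) * mu = lam * mu ^ (2 ^ n)"
    by blast
  have "l \<noteq> 0" using pow lam mu by (auto simp: power_0_left)
  obtain a b c d where A: "good_roots (xs n) (ys n) a b" "good_roots (zs n) (ts n) c d"
    "xs (Suc n) = (a * c + b * d) / 2" "ys (Suc n) = (a * d + b * c) / 2"
    "zs (Suc n) = (zs n + ts n) / 2" "ts (Suc n) = c * d"
    using F unfolding optimal_F_seq_def by blast
  obtain a' b' c' d' where B: "good_roots (xs' n) (ys' n) a' b'" "good_roots (zs' n) (ts' n) c' d'"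
    "xs' (Suc n) = (a' * c' + b' * d') / 2" "ys' (Suc n) = (a' * d' + b' * c') / 2"
    "zs' (Suc n) = (zs' n + ts' n) / 2" "ts' (Suc n) = c' * d'"
    using F' unfolding optimal_F_seq_def by blast
  obtain r where r: "r\<^sup>2 = l" "a' = r * a" "b' = r * b"
    using good_roots_scale[OF A(1) _ \<open>l \<noteq> 0\<close>] B(1) l by auto
  obtain s where s: "s\<^sup>2 = mu" "c' = s * c" "d' = s * d"
    using good_roots_scale[OF A(2) _ mu] B(2) l by auto
  have "(r * s) ^ (2 ^ Suc n) * mu = (r\<^sup>2) ^ (2 ^ n) * (s\<^sup>2) ^ (2 ^ n) * mu"
    by (simp add: power_mult power_mult_distrib[symmetric] mult.commute)
  also have "\<dots> = lam * mu ^ (2 ^ Suc n)"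
    using r(1) s(1) pow by (simp add: power_mult power2_eq_square algebra_simps)
  finally have "(r * s) ^ (2 ^ Suc n) * mu = lam * mu ^ (2 ^ Suc n)" .
  moreover have "xs' (Suc n) = (r * s) * xs (Suc n)"
    unfolding A(3) B(3) r(2,3) s(2,3) by (simp add: algebra_simps)
  moreover have "ys' (Suc n) = (r * s) * ys (Suc n)"
    unfolding A(4) B(4) r(2,3) s(2,3) by (simp add: algebra_simps)
  moreover have "zs' (Suc n) = mu * zs (Suc n)"
    unfolding A(5) B(5) l(3,4) by (simp add: algebra_simps)
  moreover have "ts' (Suc n) = mu * ts (Suc n)"
    using A(6) B(6) s by (simp add: algebra_simps power2_eq_square)
  ultimately show ?case by blast
qed

lemma optimal_F_seq_scale_normalized_power:
  assumes lam: "lam \<noteq> 0" and mu: "mu \<noteq> 0"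
    and F: "optimal_F_seq x y z t xs ys zs ts"
    and F': "optimal_F_seq (lam * x) (lam * y) (mu * z) (mu * t) xs' ys' zs' ts'"
  shows "(xs' n / (mu * w)) ^ (2 ^ n) = (lam / mu) * (xs n / w) ^ (2 ^ n)"
proof -
  obtain l where l: "xs' n = l * xs n" and pow: "l ^ (2 ^ n) * mu = lam * mu ^ (2 ^ n)"
    using optimal_F_seq_scale[OF lam mu F F'] by blast
  have "(xs' n / (mu * w)) ^ (2 ^ n) = (l ^ (2 ^ n) * mu) * (xs n / w) ^ (2 ^ n) / (mu * mu ^ (2 ^ n))"
    using mu unfolding l by (simp add: power_mult_distrib power_divide field_simps)
  also have "\<dots> = (lam / mu) * (xs n / w) ^ (2 ^ n)"
    unfolding pow using mu by (simp add: field_simps)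
  finally show ?thesis .
qed

theorem mainTheorem8:
  fixes x y z t lam mu zinf zinf' L L' :: complex
    and xs ys zs ts xs' ys' zs' ts' :: "nat \<Rightarrow> complex"
  assumes "lam \<noteq> 0" and "mu \<noteq> 0"
    and "optimal_F_seq x y z t xs ys zs ts"
    and "optimal_F_seq (lam * x) (lam * y) (mu * z) (mu * t) xs' ys' zs' ts'"
    and "zs \<longlonglongrightarrow> zinf" and "zs' \<longlonglongrightarrow> zinf'"
    and "zinf \<noteq> 0" and "zinf' \<noteq> 0"
    and "(\<lambda>n. (xs n / zinf) ^ (2 ^ n)) \<longlonglongrightarrow> L"
    and "(\<lambda>n. (xs' n / zinf') ^ (2 ^ n)) \<longlonglongrightarrow> L'"
    and "L \<noteq> 0"
  shows "mu = zinf' / zinf \<and> lam = (L' * zinf') / (L * zinf)"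
proof -
  have "zs' = (\<lambda>n. mu * zs n)"
    using optimal_F_seq_scale[OF assms(1-4)] by blast
  then have "zs' \<longlonglongrightarrow> mu * zinf" using assms(5) by (auto intro: tendsto_intros)
  then have zinf': "zinf' = mu * zinf" using assms(6) LIMSEQ_unique by blast
  have "(\<lambda>n. (xs' n / zinf') ^ (2 ^ n)) = (\<lambda>n. (lam / mu) * (xs n / zinf) ^ (2 ^ n))"
    unfolding zinf' using optimal_F_seq_scale_normalized_power[OF assms(1-4)] by blast
  moreover have "(\<lambda>n. (lam / mu) * (xs n / zinf) ^ (2 ^ n)) \<longlonglongrightarrow> (lam / mu) * L"
    using assms(9) by (rule tendsto_mult_left)
  ultimately have "(\<lambda>n. (xs' n / zinf') ^ (2 ^ n)) \<longlonglongrightarrow> (lam / mu) * L"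
    by simp
  then have "L' = (lam / mu) * L" using assms(10) LIMSEQ_unique by blast
  then show ?thesis using zinf' assms(2,7,11) by (auto simp: field_simps)
qed

end
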